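(* For every reward-mean vector $\boldsymbol{\mu}$ with a unique best arm and every cost-mean vector $\boldsymbol{c}\in[\ell,1]^K$, the map $(\boldsymbol{\mu}',\boldsymbol{c}')\mapsto\boldsymbol{w}^*(\boldsymbol{\mu}',\boldsymbol{c}')$ is continuous at $(\boldsymbol{\mu},\boldsymbol{c})$.
   Context: Rewards belong to a one-parameter natural exponential family $\{h(x)\exp(\theta_\mu x-b(\theta_\mu))\}$ parametrized by the mean, with $b$ convex and twice differentiable; $d$ is the KL divergence between family members. $\ell>0$ is a fixed constant. For reward means $\boldsymbol{\mu}'$ with unique best arm $a^*(\boldsymbol{\mu}')$ and positive cost means $\boldsymbol{c}'$, $\boldsymbol{w}^*(\boldsymbol{\mu}',\boldsymbol{c}')$ is the maximizer over the probability simplex $\Sigma_K$ of $\inf_{\boldsymbol{\lambda}:a^*(\boldsymbol{\lambda})\neq a^*(\boldsymbol{\mu}')}\sum_a\frac{w_a}{c'_a}d(\mu'_a,\lambda_a)$. *)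

theory Defs
  imports "HOL-Analysis.Analysis"
begin

text \<open>One-parameter natural exponential family with log-partition function b on the
  natural parameter interval Theta, parametrized by the mean mu = b'(theta).\<close>

definition nef :: "real set \<Rightarrow> (real \<Rightarrow> real) \<Rightarrow> bool" where
  "nef Th b \<longleftrightarrow> open Th \<and> is_interval Th \<and> Th \<noteq> {} \<and> convex_on Th b \<and>
     (\<forall>t\<in>Th. b differentiable (at t) \<and> deriv b differentiable (at t)) \<and>
     inj_on (deriv b) Th"

definition nef_means :: "real set \<Rightarrow> (real \<Rightarrow> real) \<Rightarrow> real set" where
  "nef_means Th b = deriv b ` Th"

definition nef_theta :: "real set \<Rightarrow> (real \<Rightarrow> real) \<Rightarrow> real \<Rightarrow> real" where
  "nef_theta Th b m = inv_into Th (deriv b) m"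

text \<open>KL divergence d(x,y) = KL(P_x || P_y) between family members with means x, y.\<close>
definition nef_kl :: "real set \<Rightarrow> (real \<Rightarrow> real) \<Rightarrow> real \<Rightarrow> real \<Rightarrow> real" where
  "nef_kl Th b x y =
     (nef_theta Th b x - nef_theta Th b y) * x - b (nef_theta Th b x) + b (nef_theta Th b y)"

definition unique_best :: "real^'k \<Rightarrow> 'k \<Rightarrow> bool" where
  "unique_best m a \<longleftrightarrow> (\<forall>j. j \<noteq> a \<longrightarrow> m $ j < m $ a)"

definition has_unique_best :: "real^'k \<Rightarrow> bool" where
  "has_unique_best m \<longleftrightarrow> (\<exists>a. unique_best m a)"

definition best_arm :: "real^'k \<Rightarrow> 'k" where
  "best_arm m = (THE a. unique_best m a)"

definition alt_set :: "real set \<Rightarrow> (real \<Rightarrow> real) \<Rightarrow> real^'k \<Rightarrow> (real^'k) set" where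
  "alt_set Th b m = {l. (\<forall>a. l $ a \<in> nef_means Th b) \<and> \<not> unique_best l (best_arm m)}"

definition prob_simplex :: "(real^'k) set" where
  "prob_simplex = {w. (\<forall>a. 0 \<le> w $ a) \<and> (\<Sum>a\<in>UNIV. w $ a) = 1}"

definition objective :: "real set \<Rightarrow> (real \<Rightarrow> real) \<Rightarrow> real^'k \<Rightarrow> real^'k \<Rightarrow> real^'k \<Rightarrow> real" where
  "objective Th b m c w =
     Inf ((\<lambda>l. \<Sum>a\<in>UNIV. w $ a / c $ a * nef_kl Th b (m $ a) (l $ a)) ` alt_set Th b m)"

definition wstar :: "real set \<Rightarrow> (real \<Rightarrow> real) \<Rightarrow> real^'k::finite \<Rightarrow> real^'k \<Rightarrow> real^'k" where
  "wstar Th b m c = (SOME w. w \<in> prob_simplex \<and>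
       (\<forall>v\<in>prob_simplex. objective Th b m c v \<le> objective Th b m c w))"

end

(*
  Write I_j(w) for inf_y (w_a/c_a d(mu_a, y) + w_j/c_j d(mu_j, y)), a the best arm.  Since d is
  the Bregman divergence of b in mean coordinates, the infimum is attained at the weighted mean
  of mu_a and mu_j, and the inner infimum of the objective reduces to min over j /= a of I_j(w).
  Hence the objective is jointly continuous in (mu, c, w) near a point with unique best arm.
  Each I_j is 1-homogeneous and concave in the weights, strictly off rays through the origin.
  A maximizer w* has positive entries and equalizes all I_j (otherwise shifting weight away
  from a costlier challenger improves every term); with strict concavity this makes w* unique.
  Berge's maximum theorem (continuous objective, compact simplex, unique maximizer) then gives
  continuity of w*.
*)
theory Submission
  imports Defs
begin

lemma tendsto_if_subseq_limits_unique:
  fixes x :: "nat \<Rightarrow> 'a::metric_space"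
  assumes "compact S" "\<And>n. x n \<in> S"
    and "\<And>r l. strict_mono r \<Longrightarrow> l \<in> S \<Longrightarrow> (x \<circ> r) \<longlonglongrightarrow> l \<Longrightarrow> l = y"
  shows "x \<longlonglongrightarrow> y"
proof (rule ccontr)
  assume "\<not> x \<longlonglongrightarrow> y"
  then obtain e where "e > 0" and "\<not> (\<forall>\<^sub>F n in sequentially. dist (x n) y < e)"
    unfolding tendsto_iff by blast
  then have "infinite {n. e \<le> dist (x n) y}"
    unfolding infinite_nat_iff_unbounded_le eventually_sequentially by (auto simp: not_less)
  then obtain r :: "nat \<Rightarrow> nat" where r: "strict_mono r" "\<And>n. e \<le> dist (x (r n)) y"
    using infinite_enumerate by blast
  obtain l r' where l: "l \<in> S" and r': "strict_mono r'" and lim: "((x \<circ> r) \<circ> r') \<longlonglongrightarrow> l"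
    using seq_compactE[OF compact_imp_seq_compact[OF assms(1)], of "x \<circ> r"] assms(2) by auto
  have "l = y"
    by (rule assms(3)[OF strict_mono_o[OF r(1) r'] l]) (use lim in \<open>simp add: o_assoc\<close>)
  moreover have "e \<le> dist l y"
    using r(2) by (intro tendsto_lowerbound[OF tendsto_dist[OF lim tendsto_const]]) auto
  ultimately show False
    using \<open>e > 0\<close> by simp
qed

lemma continuous_within_argmax:
  fixes F :: "'p::{first_countable_topology, t2_space} \<Rightarrow> 'a::metric_space \<Rightarrow> real"
  assumes S: "compact S" and p0: "p0 \<in> P"
    and F_cont: "\<And>w. w \<in> S \<Longrightarrow> continuous (at (p0, w) within P \<times> S) (\<lambda>(p, w). F p w)"
    and W_max: "\<And>p. p \<in> P \<Longrightarrow> W p \<in> S \<and> (\<forall>v\<in>S. F p v \<le> F p (W p))"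
    and unique: "\<And>v. v \<in> S \<Longrightarrow> \<forall>u\<in>S. F p0 u \<le> F p0 v \<Longrightarrow> v = W p0"
  shows "continuous (at p0 within P) W"
proof (rule continuous_within_sequentiallyI)
  fix ps :: "nat \<Rightarrow> 'p" assume ps: "ps \<longlonglongrightarrow> p0" "\<forall>n. ps n \<in> P"
  show "(\<lambda>n. W (ps n)) \<longlonglongrightarrow> W p0"
  proof (rule tendsto_if_subseq_limits_unique[OF S])
    show "W (ps n) \<in> S" for n
      using W_max ps(2) by blast
    fix r l assume r: "strict_mono r" and l: "l \<in> S" and lim: "((\<lambda>n. W (ps n)) \<circ> r) \<longlonglongrightarrow> l"
    define q where "q = ps \<circ> r"
    have q: "q \<longlonglongrightarrow> p0" "\<And>n. q n \<in> P"
      unfolding q_def using LIMSEQ_subseq_LIMSEQ[OF ps(1) r] ps(2) by auto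
    have F_lim: "(\<lambda>n. F (q n) (v n)) \<longlonglongrightarrow> F p0 v0"
      if "v0 \<in> S" "v \<longlonglongrightarrow> v0" "\<And>n. v n \<in> S" for v v0
      using continuous_within_tendsto_compose'[OF F_cont[OF that(1)], of "\<lambda>n. (q n, v n)"]
        q that by (simp add: tendsto_Pair)
    have "F p0 (W p0) \<le> F p0 l"
    proof (rule tendsto_le[OF trivial_limit_sequentially])
      show "(\<lambda>n. F (q n) (W (q n))) \<longlonglongrightarrow> F p0 l"
        using F_lim[OF l] lim W_max q(2) by (simp add: q_def o_def)
      show "(\<lambda>n. F (q n) (W p0)) \<longlonglongrightarrow> F p0 (W p0)"
        using F_lim[OF _ tendsto_const] W_max[OF p0] by blast
      show "\<forall>\<^sub>F n in sequentially. F (q n) (W p0) \<le> F (q n) (W (q n))"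
        using W_max[OF q(2)] W_max[OF p0] by simp
    qed
    then show "l = W p0"
      using unique[OF l] W_max[OF p0] by (auto intro: order_trans)
  qed
qed

lemma tendsto_INF_finite:
  fixes f :: "'i \<Rightarrow> 'a \<Rightarrow> real"
  assumes "finite J" "\<And>j. j \<in> J \<Longrightarrow> ((\<lambda>n. f j n) \<longlongrightarrow> l j) F"
  shows "((\<lambda>n. INF j\<in>J. f j n) \<longlongrightarrow> (INF j\<in>J. l j)) F"
  using assms
proof (induction J rule: finite_induct)
  case (insert k J)
  show ?case
  proof (cases "J = {}")
    case False
    then have "((\<lambda>n. min (f k n) (INF j\<in>J. f j n)) \<longlongrightarrow> min (l k) (INF j\<in>J. l j)) F"
      using insert by (intro tendsto_min) auto
    then show ?thesis
      using False insert.hyps(1) by (simp add: cInf_insert bdd_below_finite inf_min)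
  qed (use insert.prems in simp)
qed simp

lemma best_arm_eq: "unique_best m a \<Longrightarrow> best_arm m = a"
  unfolding best_arm_def unique_best_def by (rule the_equality) (auto dest: less_asym)

lemma eventually_unique_best:
  fixes m :: "real^'k::finite"
  assumes "unique_best m a" "(ms \<longlongrightarrow> m) F"
  shows "\<forall>\<^sub>F n in F. unique_best (ms n) a"
proof -
  have "\<forall>\<^sub>F n in F. ms n \<in> {l. l $ j < l $ a}" if "j \<noteq> a" for j
    using assms that unfolding unique_best_def
    by (intro topological_tendstoD open_Collect_less continuous_intros) auto
  then have "\<forall>\<^sub>F n in F. \<forall>j. j \<noteq> a \<longrightarrow> ms n $ j < ms n $ a"
    by (intro eventually_all_finite) (auto simp: eventually_mono)
  then show ?thesis
    unfolding unique_best_def .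
qed

lemma prob_simplex_nonneg: "w \<in> prob_simplex \<Longrightarrow> 0 \<le> w $ i"
  unfolding prob_simplex_def by simp

lemma prob_simplex_le_1: "w \<in> prob_simplex \<Longrightarrow> w $ i \<le> 1"
  unfolding prob_simplex_def using member_le_sum[of i UNIV "\<lambda>a. w $ a"] by auto

lemma compact_prob_simplex: "compact (prob_simplex :: (real^'k::finite) set)"
  unfolding compact_eq_bounded_closed
proof
  have "w \<in> cbox 0 1" if "w \<in> prob_simplex" for w :: "real^'k"
    using prob_simplex_le_1[OF that] that by (auto simp: prob_simplex_def mem_box_cart)
  then have "prob_simplex \<subseteq> cbox (0::real^'k) 1"
    by blast
  then show "bounded (prob_simplex :: (real^'k) set)"
    using bounded_cbox bounded_subset by blast
  show "closed (prob_simplex :: (real^'k) set)"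
    unfolding prob_simplex_def
    by (intro closed_Collect_conj closed_Collect_all closed_Collect_le closed_Collect_eq continuous_intros)
qed

lemma uniform_in_prob_simplex: "(\<chi> i::'k::finite. 1 / real CARD('k)) \<in> prob_simplex"
  unfolding prob_simplex_def by simp

lemma prob_simplex_proportional_eq:
  assumes "w \<in> prob_simplex" "w' \<in> prob_simplex" "w $ a \<noteq> 0"
    and "\<And>j. w $ a * w' $ j = w' $ a * w $ j"
  shows "w = w'"
proof -
  have "w $ a * (\<Sum>j\<in>UNIV. w' $ j) = w' $ a * (\<Sum>j\<in>UNIV. w $ j)"
    unfolding sum_distrib_left assms(4) ..
  then have "w $ a = w' $ a"
    using assms(1,2) unfolding prob_simplex_def by simp
  then show ?thesis
    using assms(3,4) by (simp add: vec_eq_iff)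
qed

definition shift_weight :: "real \<Rightarrow> 'k::finite \<Rightarrow> real^'k \<Rightarrow> real^'k" where
  "shift_weight t k u =
     (1 / (1 - t * u $ k)) *\<^sub>R (\<chi> i. if i = k then (1 - t) * u $ i else u $ i)"

lemma shift_weight_in_prob_simplex:
  assumes u: "u \<in> prob_simplex" and t: "0 \<le> t" "t < 1"
  shows "shift_weight t k u \<in> prob_simplex"
proof -
  have "t * u $ k < 1"
    using mult_left_le[OF prob_simplex_le_1[OF u, of k] t(1)] t(2) by linarith
  moreover have "(\<Sum>i\<in>UNIV. if i = k then (1 - t) * u $ i else u $ i) =
      (\<Sum>i\<in>UNIV. u $ i - (if i = k then t * u $ i else 0))"
    by (intro sum.cong) (auto simp: algebra_simps)
  then have "(\<Sum>i\<in>UNIV. if i = k then (1 - t) * u $ i else u $ i) = 1 - t * u $ k"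
    using u unfolding prob_simplex_def by (simp add: sum_subtractf)
  ultimately show ?thesis
    using u t unfolding prob_simplex_def shift_weight_def by (simp flip: sum_divide_distrib)
qed

definition wmean :: "real \<Rightarrow> real \<Rightarrow> real \<Rightarrow> real \<Rightarrow> real" where
  "wmean p q x z = (p * x + q * z) / (p + q)"

lemma wmean_scale: "r \<noteq> 0 \<Longrightarrow> wmean (r * p) (r * q) x z = wmean p q x z"
  unfolding wmean_def by (simp add: mult.assoc flip: distrib_left)

lemma wmean_eq_imp_proportional:
  assumes "p + q \<noteq> 0" "p' + q' \<noteq> 0" "x \<noteq> z" "wmean p q x z = wmean p' q' x z"
  shows "p * q' = p' * q"
proof -
  have "(p * q' - p' * q) * (x - z) = 0"
    using assms by (simp add: wmean_def frac_eq_eq algebra_simps)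
  then show ?thesis
    using assms(3) by simp
qed

locale nef_family =
  fixes Th :: "real set" and b :: "real \<Rightarrow> real"
  assumes nef: "nef Th b"
begin

abbreviation "M \<equiv> nef_means Th b"
abbreviation "T \<equiv> nef_theta Th b"
abbreviation "kl \<equiv> nef_kl Th b"

lemma open_Th: "open Th" and interval_Th: "is_interval Th"
  and convex_b: "convex_on Th b" and differentiable_b: "t \<in> Th \<Longrightarrow> b differentiable (at t)"
  and differentiable_deriv_b: "t \<in> Th \<Longrightarrow> deriv b differentiable (at t)"
  and inj_deriv_b: "inj_on (deriv b) Th"
  using nef unfolding nef_def by auto

lemma isCont_b: "t \<in> Th \<Longrightarrow> isCont b t"
  using differentiable_b differentiable_imp_continuous_within by blast

lemma isCont_deriv_b: "t \<in> Th \<Longrightarrow> isCont (deriv b) t"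
  using differentiable_deriv_b differentiable_imp_continuous_within by blast

lemma theta_in: "y \<in> M \<Longrightarrow> T y \<in> Th"
  unfolding nef_means_def nef_theta_def by (simp add: inv_into_into)

lemma deriv_b_theta: "y \<in> M \<Longrightarrow> deriv b (T y) = y"
  unfolding nef_means_def nef_theta_def by (simp add: f_inv_into_f)

lemma theta_deriv_b: "t \<in> Th \<Longrightarrow> T (deriv b t) = t"
  unfolding nef_theta_def using inj_deriv_b by (simp add: inv_into_f_f)

lemma tangent_below_b:
  assumes "s \<in> Th" "t \<in> Th"
  shows "deriv b s * (t - s) \<le> b t - b s"
proof -
  have "(b has_real_derivative deriv b s) (at s within Th)"
    using differentiable_b[OF assms(1)] DERIV_deriv_iff_real_differentiable
      has_field_derivative_at_within by blast
  then show ?thesis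
    using convex_on_imp_above_tangent[OF convex_b] assms open_Th interval_Th
    by (simp add: interior_open is_interval_connected)
qed

lemma mono_deriv_b:
  assumes "s \<in> Th" "t \<in> Th" "s \<le> t"
  shows "deriv b s \<le> deriv b t"
proof -
  have "0 \<le> (deriv b t - deriv b s) * (t - s)"
    using tangent_below_b[OF assms(1,2)] tangent_below_b[OF assms(2,1)] by (simp add: algebra_simps)
  then show ?thesis
    using assms(3) by (cases "s = t") (auto simp: zero_le_mult_iff)
qed

lemma theta_strict_mono:
  assumes "x \<in> M" "y \<in> M" "x < y"
  shows "T x < T y"
  using mono_deriv_b[of "T y" "T x"] assms theta_in deriv_b_theta by force

lemma theta_mono: "x \<in> M \<Longrightarrow> y \<in> M \<Longrightarrow> x \<le> y \<Longrightarrow> T x \<le> T y"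
  using theta_strict_mono[of x y] by (cases "x = y") auto

lemma is_interval_means: "is_interval M"
proof -
  have "continuous_on Th (deriv b)"
    using isCont_deriv_b continuous_at_imp_continuous_on by blast
  then show ?thesis
    unfolding nef_means_def is_interval_connected_1
    using connected_continuous_image interval_Th is_interval_connected by blast
qed

lemma means_between: "x \<in> M \<Longrightarrow> z \<in> M \<Longrightarrow> x \<le> y \<Longrightarrow> y \<le> z \<Longrightarrow> y \<in> M"
  using is_interval_means unfolding is_interval_1 by blast

lemma isCont_theta:
  assumes "y \<in> M"
  shows "isCont T y"
proof -
  obtain d where "d > 0" and d: "ball (T y) d \<subseteq> Th"
    using open_Th theta_in[OF assms] openE by blast
  have box: "z \<in> Th" if "T y - d/2 \<le> z" "z \<le> T y + d/2" for z
    using subsetD[OF d, of z] that \<open>d > 0\<close> by (simp add: dist_real_def)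
  have "isCont T (deriv b (T y))"
    by (rule isCont_inverse_function2[of "T y - d/2" _ "T y + d/2"])
      (use \<open>d > 0\<close> box theta_deriv_b isCont_deriv_b in simp_all)
  then show ?thesis
    using deriv_b_theta[OF assms] by simp
qed

lemma kl_three_point: "kl x z = kl x y + kl y z + (T y - T z) * (x - y)"
  unfolding nef_kl_def by (simp add: algebra_simps)

lemma kl_self [simp]: "kl x x = 0"
  unfolding nef_kl_def by simp

lemma kl_nonneg: "x \<in> M \<Longrightarrow> y \<in> M \<Longrightarrow> 0 \<le> kl x y"
  using tangent_below_b[OF theta_in theta_in, of x y] deriv_b_theta[of x]
  unfolding nef_kl_def by (simp add: algebra_simps)

lemma kl_pos:
  assumes "x \<in> M" "y \<in> M" "x \<noteq> y"
  shows "0 < kl x y"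
proof -
  define z where "z = (x + y) / 2"
  have "z \<in> M"
    using means_between[of x y z] means_between[of y x z] assms unfolding z_def
    by (cases "x \<le> y") auto
  moreover have "0 < (T z - T y) * (x - z)"
    using theta_strict_mono[of z y] theta_strict_mono[of y z] \<open>z \<in> M\<close> assms
    by (cases "x < y") (auto simp: z_def mult_pos_pos mult_neg_neg)
  ultimately show ?thesis
    using kl_three_point[of x y z] kl_nonneg[of x z] kl_nonneg[of z y] assms by linarith
qed

lemma kl_eq_0_iff: "x \<in> M \<Longrightarrow> y \<in> M \<Longrightarrow> kl x y = 0 \<longleftrightarrow> x = y"
  using kl_pos by force

lemma kl_mono_right:
  assumes "x \<in> M" "y \<in> M" "z \<in> M" "x \<le> y" "y \<le> z"
  shows "kl x y \<le> kl x z"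
  using kl_three_point[of x z y] theta_mono[of y z] kl_nonneg[of y z] assms
  by (simp add: mult_nonpos_nonpos add_nonneg_nonneg)

lemma kl_antimono_right:
  assumes "x \<in> M" "y \<in> M" "z \<in> M" "z \<le> y" "y \<le> x"
  shows "kl x y \<le> kl x z"
  using kl_three_point[of x z y] theta_mono[of z y] kl_nonneg[of y z] assms
  by (simp add: add_nonneg_nonneg)

lemma tendsto_kl:
  assumes "(f \<longlongrightarrow> x) F" "(g \<longlongrightarrow> y) F" "x \<in> M" "y \<in> M"
  shows "((\<lambda>n. kl (f n) (g n)) \<longlongrightarrow> kl x y) F"
proof -
  have "((\<lambda>n. T (f n)) \<longlongrightarrow> T x) F" "((\<lambda>n. T (g n)) \<longlongrightarrow> T y) F"
    using isCont_tendsto_compose[OF isCont_theta] assms by blast+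
  moreover from this have "((\<lambda>n. b (T (f n))) \<longlongrightarrow> b (T x)) F" "((\<lambda>n. b (T (g n))) \<longlongrightarrow> b (T y)) F"
    using isCont_tendsto_compose[OF isCont_b[OF theta_in]] assms by blast+
  ultimately show ?thesis
    unfolding nef_kl_def by (intro tendsto_intros assms(1))
qed

lemma wmean_in_means:
  assumes "0 \<le> p" "0 \<le> q" "0 < p + q" "x \<in> M" "z \<in> M"
  shows "wmean p q x z \<in> M"
proof -
  have "wmean p q x z = p / (p + q) * x + q / (p + q) * z"
    unfolding wmean_def by (simp add: add_divide_distrib)
  moreover have "p / (p + q) + q / (p + q) = 1"
    using assms(3) by (simp flip: add_divide_distrib)
  ultimately show ?thesis
    using convexD[OF is_interval_convex_1[THEN iffD1, OF is_interval_means] assms(4,5),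
        of "p / (p + q)" "q / (p + q)"] assms by simp
qed

definition pair_div :: "real \<Rightarrow> real \<Rightarrow> real \<Rightarrow> real \<Rightarrow> real" where
  "pair_div p q x z = p * kl x (wmean p q x z) + q * kl z (wmean p q x z)"

lemma kl_compensation:
  assumes "p + q \<noteq> 0"
  shows "p * kl x y + q * kl z y = pair_div p q x z + (p + q) * kl (wmean p q x z) y"
proof -
  define Y where "Y = wmean p q x z"
  have "p * (x - Y) + q * (z - Y) = 0"
    using assms by (simp add: Y_def wmean_def field_simps)
  moreover have "p * kl x y + q * kl z y =
      p * kl x Y + q * kl z Y + (p + q) * kl Y y + (T Y - T y) * (p * (x - Y) + q * (z - Y))"
    unfolding kl_three_point[of x y Y] kl_three_point[of z y Y] by (simp add: algebra_simps)
  ultimately show ?thesis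
    by (simp add: pair_div_def Y_def)
qed

lemma pair_div_zero_weight: "p = 0 \<or> q = 0 \<Longrightarrow> pair_div p q x z = 0"
  by (auto simp: pair_div_def wmean_def)

lemma pair_div_scale: "pair_div (r * p) (r * q) x z = r * pair_div p q x z"
proof (cases "r = 0")
  case False
  then show ?thesis
    unfolding pair_div_def wmean_scale[OF False] by (simp add: algebra_simps)
qed (simp add: pair_div_def)

lemma pair_div_le:
  assumes "0 \<le> p" "0 \<le> q" "x \<in> M" "z \<in> M" "y \<in> M"
  shows "pair_div p q x z \<le> p * kl x y + q * kl z y"
proof (cases "p + q = 0")
  case True
  then have "p = 0" "q = 0"
    using assms by auto
  then show ?thesis
    by (simp add: pair_div_zero_weight)
next
  case False
  then show ?thesis
    using kl_compensation[OF False, of x y z] kl_nonneg[OF wmean_in_means assms(5)] assms by simp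
qed

lemma pair_div_attained:
  assumes "0 \<le> p" "0 \<le> q" "x \<in> M" "z \<in> M"
  obtains y where "y \<in> M" "pair_div p q x z = p * kl x y + q * kl z y"
proof (cases "p + q = 0")
  case True
  then show ?thesis
    using that[of x] assms pair_div_zero_weight by auto
next
  case False
  then show ?thesis
    using that[OF wmean_in_means] assms by (simp add: pair_div_def)
qed

lemma pair_div_nonneg:
  assumes "0 \<le> p" "0 \<le> q" "x \<in> M" "z \<in> M"
  shows "0 \<le> pair_div p q x z"
  by (rule pair_div_attained[OF assms]) (use assms kl_nonneg in simp)

lemma pair_div_pos:
  assumes "0 < p" "0 < q" "x \<in> M" "z \<in> M" "x \<noteq> z"
  shows "0 < pair_div p q x z"
proof -
  have Y: "wmean p q x z \<in> M"
    using wmean_in_means assms by simp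
  have "wmean p q x z \<noteq> x"
    using assms by (auto simp: wmean_def field_simps)
  then have "0 < p * kl x (wmean p q x z)"
    using kl_pos[OF assms(3) Y] assms(1) by simp
  then show ?thesis
    using kl_nonneg[OF assms(4) Y] assms(2) unfolding pair_div_def by (simp add: add_pos_nonneg)
qed

lemma pair_div_mono:
  assumes "0 \<le> p'" "p' \<le> p" "0 \<le> q" "x \<in> M" "z \<in> M"
  shows "pair_div p' q x z \<le> pair_div p q x z"
proof (cases "p + q = 0")
  case True
  then show ?thesis
    using assms pair_div_zero_weight by simp
next
  case False
  then have Y: "wmean p q x z \<in> M"
    using wmean_in_means assms by simp
  have "pair_div p' q x z \<le> p' * kl x (wmean p q x z) + q * kl z (wmean p q x z)"
    using pair_div_le[OF _ _ _ _ Y] assms by simp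
  also have "\<dots> \<le> pair_div p q x z"
    unfolding pair_div_def using kl_nonneg[OF assms(4) Y] assms(2) by (simp add: mult_right_mono)
  finally show ?thesis .
qed

lemma pair_div_superadditive:
  assumes "0 \<le> p" "0 \<le> q" "0 \<le> p'" "0 \<le> q'" "x \<in> M" "z \<in> M"
  shows "pair_div p q x z + pair_div p' q' x z \<le> pair_div (p + p') (q + q') x z"
proof -
  obtain y where "y \<in> M" and y: "pair_div (p + p') (q + q') x z = (p + p') * kl x y + (q + q') * kl z y"
    using pair_div_attained[of "p + p'" "q + q'" x z] assms by auto
  then show ?thesis
    using pair_div_le[of p q x z y] pair_div_le[of p' q' x z y] assms by (simp add: algebra_simps)
qed

lemma pair_div_superadditive_eq_imp_proportional:
  assumes "0 < p" "0 < q" "0 < p'" "0 < q'" "x \<in> M" "z \<in> M" "x \<noteq> z"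
    and eq: "pair_div (p + p') (q + q') x z = pair_div p q x z + pair_div p' q' x z"
  shows "p * q' = p' * q"
proof -
  define Y where "Y = wmean (p + p') (q + q') x z"
  have Y: "Y \<in> M"
    unfolding Y_def using wmean_in_means assms by simp
  have "pair_div (p + p') (q + q') x z = (p * kl x Y + q * kl z Y) + (p' * kl x Y + q' * kl z Y)"
    by (simp add: pair_div_def Y_def algebra_simps)
  then have "pair_div p q x z = p * kl x Y + q * kl z Y" "pair_div p' q' x z = p' * kl x Y + q' * kl z Y"
    using eq pair_div_le[of p q x z Y] pair_div_le[of p' q' x z Y] assms Y by simp_all
  then have "(p + q) * kl (wmean p q x z) Y = 0" "(p' + q') * kl (wmean p' q' x z) Y = 0"
    using kl_compensation[of p q x Y z] kl_compensation[of p' q' x Y z] assms by simp_all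
  then have "wmean p q x z = Y" "wmean p' q' x z = Y"
    using kl_eq_0_iff[OF wmean_in_means Y] assms by simp_all
  then show ?thesis
    using wmean_eq_imp_proportional[of p q p' q' x z] assms by simp
qed

lemma pair_div_le_crossed:
  assumes "0 \<le> p" "0 \<le> q" "x \<in> M" "z \<in> M" "y \<in> M" "y' \<in> M" "z \<le> x" "y \<le> y'"
  shows "pair_div p q x z \<le> p * kl x y + q * kl z y'"
proof (cases "z \<le> y")
  case True
  then have "q * kl z y \<le> q * kl z y'"
    using kl_mono_right[of z y y'] assms by (simp add: mult_left_mono)
  then show ?thesis
    using pair_div_le[of p q x z y] assms by simp
next
  case False
  then have "p * kl x z \<le> p * kl x y"
    using kl_antimono_right[of x z y] assms by (simp add: mult_left_mono)
  then show ?thesis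
    using pair_div_le[of p q x z z] kl_nonneg[of z y'] assms by (simp add: add_increasing2)
qed

lemma tendsto_pair_div:
  assumes "(ps \<longlongrightarrow> p) F" "(qs \<longlongrightarrow> q) F" "(xs \<longlongrightarrow> x) F" "(zs \<longlongrightarrow> z) F"
    and "0 \<le> p" "0 \<le> q" "x \<in> M" "z \<in> M"
    and "\<forall>\<^sub>F n in F. 0 \<le> ps n \<and> 0 \<le> qs n \<and> xs n \<in> M \<and> zs n \<in> M"
  shows "((\<lambda>n. pair_div (ps n) (qs n) (xs n) (zs n)) \<longlongrightarrow> pair_div p q x z) F"
proof (cases "p = 0 \<or> q = 0")
  case True
  let ?u = "\<lambda>n. min (ps n * kl (xs n) (zs n)) (qs n * kl (zs n) (xs n))"
  have "(?u \<longlongrightarrow> min (p * kl x z) (q * kl z x)) F"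
    using assms by (intro tendsto_min tendsto_mult tendsto_kl)
  moreover have "min (p * kl x z) (q * kl z x) = 0"
    using True kl_nonneg[OF assms(7,8)] kl_nonneg[OF assms(8,7)] assms(5,6) by auto
  ultimately have upper_lim: "(?u \<longlongrightarrow> 0) F"
    by simp
  have lower: "\<forall>\<^sub>F n in F. 0 \<le> pair_div (ps n) (qs n) (xs n) (zs n)"
    using assms(9) by (rule eventually_mono) (simp add: pair_div_nonneg)
  have upper: "\<forall>\<^sub>F n in F. pair_div (ps n) (qs n) (xs n) (zs n) \<le> ?u n"
    using assms(9)
  proof eventually_elim
    case (elim n)
    then show ?case
      using pair_div_le[of "ps n" "qs n" "xs n" "zs n" "zs n"]
        pair_div_le[of "ps n" "qs n" "xs n" "zs n" "xs n"] by simp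
  qed
  show ?thesis
    using tendsto_sandwich[OF lower upper tendsto_const upper_lim] pair_div_zero_weight[OF True]
    by simp
next
  case False
  then have "((\<lambda>n. wmean (ps n) (qs n) (xs n) (zs n)) \<longlongrightarrow> wmean p q x z) F"
    unfolding wmean_def using assms by (intro tendsto_divide tendsto_add tendsto_mult) auto
  moreover have "wmean p q x z \<in> M"
    using wmean_in_means False assms by simp
  ultimately show ?thesis
    unfolding pair_div_def using assms by (intro tendsto_add tendsto_mult tendsto_kl)
qed

lemma alt_set_iff:
  assumes "unique_best m a"
  shows "l \<in> alt_set Th b m \<longleftrightarrow> (\<forall>i. l $ i \<in> M) \<and> (\<exists>j. j \<noteq> a \<and> l $ a \<le> l $ j)"
  unfolding alt_set_def best_arm_eq[OF assms] unique_best_def by (auto simp: not_less)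

text \<open>I_j(w) of the header; by arm_div_le_alt_div and arm_div_attained it is the paper's
  inf over lambda_a \<le> lambda_j of w_a/c_a d(mu_a, lambda_a) + w_j/c_j d(mu_j, lambda_j).\<close>
definition arm_div :: "real^'k \<Rightarrow> real^'k \<Rightarrow> real^'k \<Rightarrow> 'k \<Rightarrow> 'k \<Rightarrow> real" where
  "arm_div m c w a j = pair_div (w $ a / c $ a) (w $ j / c $ j) (m $ a) (m $ j)"

context
  fixes m c w :: "real^'k::finite" and a :: 'k
  assumes best: "unique_best m a" and m_in: "\<forall>i. m $ i \<in> M"
    and c_pos: "\<forall>i. 0 < c $ i" and w_nonneg: "\<forall>i. 0 \<le> w $ i"
begin

abbreviation "alt_div l \<equiv> \<Sum>i\<in>UNIV. w $ i / c $ i * kl (m $ i) (l $ i)"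

lemma weights_nonneg: "0 \<le> w $ i / c $ i"
  using c_pos w_nonneg by (simp add: less_imp_le)

lemma alt_div_summand_nonneg: "x \<in> M \<Longrightarrow> 0 \<le> w $ i / c $ i * kl (m $ i) x"
  by (intro mult_nonneg_nonneg weights_nonneg kl_nonneg) (use m_in in auto)

lemma arm_div_le_alt_div:
  assumes "\<forall>i. l $ i \<in> M" "j \<noteq> a" "l $ a \<le> l $ j"
  shows "arm_div m c w a j \<le> alt_div l"
proof -
  have "arm_div m c w a j \<le> w $ a / c $ a * kl (m $ a) (l $ a) + w $ j / c $ j * kl (m $ j) (l $ j)"
    unfolding arm_div_def using assms best m_in weights_nonneg
    by (intro pair_div_le_crossed) (auto simp: unique_best_def less_imp_le)
  also have "\<dots> = (\<Sum>i\<in>{a, j}. w $ i / c $ i * kl (m $ i) (l $ i))"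
    using assms(2) by simp
  also have "\<dots> \<le> alt_div l"
    using assms(1) by (intro sum_mono2 alt_div_summand_nonneg) auto
  finally show ?thesis .
qed

lemma arm_div_attained:
  assumes "j \<noteq> a"
  obtains l where "l \<in> alt_set Th b m" "alt_div l = arm_div m c w a j"
proof -
  obtain y where "y \<in> M" and y: "arm_div m c w a j =
      w $ a / c $ a * kl (m $ a) y + w $ j / c $ j * kl (m $ j) y"
    unfolding arm_div_def using pair_div_attained weights_nonneg m_in by metis
  define l where "l = (\<chi> i. if i = a \<or> i = j then y else m $ i)"
  have "l \<in> alt_set Th b m"
    using \<open>y \<in> M\<close> m_in assms unfolding alt_set_iff[OF best] l_def by auto
  moreover have "alt_div l = (\<Sum>i\<in>{a, j}. w $ i / c $ i * kl (m $ i) (l $ i))"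
    by (rule sum.mono_neutral_right) (auto simp: l_def)
  ultimately show ?thesis
    using that y assms by (simp add: l_def)
qed

lemma objective_eq_INF: "objective Th b m c w = (INF j\<in>-{a}. arm_div m c w a j)"
proof (cases "-{a} = {}")
  case True
  then have "alt_set Th b m = {}"
    using alt_set_iff[OF best] by auto
  then show ?thesis
    using True by (simp add: objective_def)
next
  case False
  have alt_nonempty: "alt_set Th b m \<noteq> {}"
    using False arm_div_attained by blast
  have "0 \<le> alt_div l" if "l \<in> alt_set Th b m" for l
    by (intro sum_nonneg alt_div_summand_nonneg) (use that alt_set_iff[OF best] in auto)
  then have bdd: "bdd_below (alt_div ` alt_set Th b m)"
    by (rule bdd_belowI2)
  have "Inf (alt_div ` alt_set Th b m) \<le> arm_div m c w a j" if j: "j \<noteq> a" for j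
  proof -
    obtain l where l: "l \<in> alt_set Th b m" "alt_div l = arm_div m c w a j"
      using arm_div_attained[OF j] .
    have "Inf (alt_div ` alt_set Th b m) \<le> alt_div l"
      by (rule cInf_lower[OF imageI[OF l(1)] bdd])
    then show ?thesis
      using l(2) by simp
  qed
  then have le: "Inf (alt_div ` alt_set Th b m) \<le> (INF j\<in>-{a}. arm_div m c w a j)"
    using False by (intro cINF_greatest) auto
  have "(INF j\<in>-{a}. arm_div m c w a j) \<le> alt_div l" if l: "l \<in> alt_set Th b m" for l
  proof -
    obtain j where j: "\<forall>i. l $ i \<in> M" "j \<noteq> a" "l $ a \<le> l $ j"
      using l unfolding alt_set_iff[OF best] by blast
    then have "(INF j\<in>-{a}. arm_div m c w a j) \<le> arm_div m c w a j"
      by (intro cINF_lower bdd_below_finite) auto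
    also have "\<dots> \<le> alt_div l"
      using arm_div_le_alt_div[OF j] .
    finally show ?thesis .
  qed
  then have ge: "(INF j\<in>-{a}. arm_div m c w a j) \<le> Inf (alt_div ` alt_set Th b m)"
    using alt_nonempty by (intro cInf_greatest) auto
  show ?thesis
    unfolding objective_def using order_antisym[OF le ge] by simp
qed

lemma objective_le_arm_div: "j \<noteq> a \<Longrightarrow> objective Th b m c w \<le> arm_div m c w a j"
  unfolding objective_eq_INF by (intro cINF_lower bdd_below_finite) auto

lemma le_objective_iff:
  "j \<noteq> a \<Longrightarrow> t \<le> objective Th b m c w \<longleftrightarrow> (\<forall>k. k \<noteq> a \<longrightarrow> t \<le> arm_div m c w a k)"
  unfolding objective_eq_INF by (subst le_cINF_iff) (auto intro: bdd_below_finite)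

lemma less_objective_iff:
  "j \<noteq> a \<Longrightarrow> t < objective Th b m c w \<longleftrightarrow> (\<forall>k. k \<noteq> a \<longrightarrow> t < arm_div m c w a k)"
  unfolding objective_eq_INF by (subst finite_less_Inf_iff) auto

end

lemma tendsto_objective:
  assumes "unique_best m a" "\<forall>i. m $ i \<in> M" "\<forall>i. 0 < c $ i" "\<forall>i. 0 \<le> w $ i"
    and "(ms \<longlongrightarrow> m) F" "(cs \<longlongrightarrow> c) F" "(ws \<longlongrightarrow> w) F"
    and "\<forall>\<^sub>F n in F. (\<forall>i. ms n $ i \<in> M) \<and> (\<forall>i. 0 < cs n $ i) \<and> (\<forall>i. 0 \<le> ws n $ i)"
  shows "((\<lambda>n. objective Th b (ms n) (cs n) (ws n)) \<longlongrightarrow> objective Th b m c w) F"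
proof -
  have "((\<lambda>n. arm_div (ms n) (cs n) (ws n) a j) \<longlongrightarrow> arm_div m c w a j) F" for j
  proof -
    have "c $ a \<noteq> 0" "c $ j \<noteq> 0"
      using assms(3) by (metis less_irrefl)+
    then show ?thesis
      unfolding arm_div_def using assms(2-8)
      by (intro tendsto_pair_div tendsto_divide tendsto_vec_nth)
        (auto elim!: eventually_mono simp: less_imp_le)
  qed
  then have "((\<lambda>n. INF j\<in>-{a}. arm_div (ms n) (cs n) (ws n) a j) \<longlongrightarrow> objective Th b m c w) F"
    unfolding objective_eq_INF[OF assms(1-4)] by (intro tendsto_INF_finite) auto
  moreover have "\<forall>\<^sub>F n in F.
      objective Th b (ms n) (cs n) (ws n) = (INF j\<in>-{a}. arm_div (ms n) (cs n) (ws n) a j)"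
    using eventually_unique_best[OF assms(1,5)] assms(8)
    by eventually_elim (simp add: objective_eq_INF)
  ultimately show ?thesis
    by (simp add: tendsto_cong)
qed

lemma continuous_on_objective:
  fixes m c :: "real^'k::finite"
  assumes "unique_best m a" "\<forall>i. m $ i \<in> M" "\<forall>i. 0 < c $ i"
  shows "continuous_on prob_simplex (objective Th b m c)"
  unfolding continuous_on_def
proof
  fix w :: "real^'k" assume w: "w \<in> prob_simplex"
  have near: "\<forall>\<^sub>F v in at w within prob_simplex. v \<in> prob_simplex"
    by (simp add: eventually_at_filter)
  show "(objective Th b m c \<longlongrightarrow> objective Th b m c w) (at w within prob_simplex)"
    by (rule tendsto_objective[OF assms _ tendsto_const tendsto_const tendsto_ident_at])
      (use w near assms in \<open>auto simp: prob_simplex_def elim!: eventually_mono\<close>)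
qed

definition optimal_weights :: "real^'k::finite \<Rightarrow> real^'k \<Rightarrow> real^'k \<Rightarrow> bool" where
  "optimal_weights m c w \<longleftrightarrow>
     w \<in> prob_simplex \<and> (\<forall>v\<in>prob_simplex. objective Th b m c v \<le> objective Th b m c w)"

lemma optimal_weights_exist:
  fixes m c :: "real^'k::finite"
  assumes "unique_best m a" "\<forall>i. m $ i \<in> M" "\<forall>i. 0 < c $ i"
  shows "\<exists>w. optimal_weights m c w"
  using continuous_attains_sup[OF compact_prob_simplex _ continuous_on_objective[OF assms]]
    uniform_in_prob_simplex
  unfolding optimal_weights_def by blast

lemma wstar_optimal:
  assumes "has_unique_best m" "\<forall>i. m $ i \<in> M" "\<forall>i. 0 < c $ i"
  shows "optimal_weights m c (wstar Th b m c)"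
proof -
  obtain a where "unique_best m a"
    using assms(1) unfolding has_unique_best_def ..
  then show ?thesis
    using someI_ex[OF optimal_weights_exist] assms(2,3)
    unfolding wstar_def optimal_weights_def by blast
qed

lemma arm_div_scaleR: "arm_div m c (r *\<^sub>R w) a j = r * arm_div m c w a j"
  unfolding arm_div_def using pair_div_scale[of r "w $ a / c $ a" "w $ j / c $ j"] by simp

context
  fixes m c :: "real^'k::finite" and a :: 'k
  assumes best: "unique_best m a" and m_in: "\<forall>i. m $ i \<in> M" and c_pos: "\<forall>i. 0 < c $ i"
begin

lemma arm_div_superadditive:
  assumes "\<forall>i. 0 \<le> w $ i" "\<forall>i. 0 \<le> w' $ i"
  shows "arm_div m c w a j + arm_div m c w' a j \<le> arm_div m c (w + w') a j"
  unfolding arm_div_def using assms m_in c_pos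
  by (simp add: add_divide_distrib pair_div_superadditive less_imp_le)

lemma arm_div_superadditive_eq_imp_proportional:
  assumes "\<forall>i. 0 < w $ i" "\<forall>i. 0 < w' $ i" "j \<noteq> a"
    and "arm_div m c (w + w') a j = arm_div m c w a j + arm_div m c w' a j"
  shows "w $ a * w' $ j = w' $ a * w $ j"
proof -
  have "m $ a \<noteq> m $ j"
    using best assms(3) unfolding unique_best_def by (metis less_irrefl)
  then have "w $ a / c $ a * (w' $ j / c $ j) = w' $ a / c $ a * (w $ j / c $ j)"
    using assms m_in c_pos unfolding arm_div_def
    by (intro pair_div_superadditive_eq_imp_proportional) (simp_all add: add_divide_distrib)
  then show ?thesis
    using c_pos[rule_format, of a] c_pos[rule_format, of j] by (simp add: field_simps)
qed

lemma optimal_weights_pos: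
  assumes opt: "optimal_weights m c w" and other: "\<exists>j. j \<noteq> a"
  shows "0 < objective Th b m c w" "0 < w $ i"
proof -
  obtain j0 where j0: "j0 \<noteq> a"
    using other ..
  define u :: "real^'k" where "u = (\<chi> i. 1 / real CARD('k))"
  have "0 < arm_div m c u a k" if "k \<noteq> a" for k
    unfolding arm_div_def u_def using best that m_in c_pos
    by (intro pair_div_pos) (auto simp: unique_best_def)
  then have "0 < objective Th b m c u"
    using less_objective_iff[OF best m_in c_pos _ j0] by (simp add: u_def)
  also have "\<dots> \<le> objective Th b m c w"
    using opt uniform_in_prob_simplex unfolding optimal_weights_def u_def by blast
  finally show pos: "0 < objective Th b m c w" .
  show "0 < w $ i"
  proof (rule ccontr)
    assume "\<not> 0 < w $ i"
    then have "w $ i = 0"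
      using opt prob_simplex_nonneg[of w i] unfolding optimal_weights_def by simp
    define k where "k = (if i = a then j0 else i)"
    have "k \<noteq> a"
      using j0 by (simp add: k_def)
    moreover have "arm_div m c w a k = 0"
      unfolding arm_div_def k_def using \<open>w $ i = 0\<close> by (auto intro: pair_div_zero_weight)
    ultimately show False
      using objective_le_arm_div[OF best m_in c_pos, of w k] pos opt prob_simplex_nonneg
      unfolding optimal_weights_def by fastforce
  qed
qed

lemma less_arm_div_shift_weight:
  assumes u: "u \<in> prob_simplex" "0 < u $ k" and t: "0 < t" "t < 1"
    and k: "k \<noteq> a" and j: "j \<noteq> a"
    and V: "0 < V" "V \<le> arm_div m c u a j" "V < (1 - t) * arm_div m c u a k"
  shows "V < arm_div m c (shift_weight t k u) a j"
proof -
  define s where "s = 1 / (1 - t * u $ k)"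
  have "t * u $ k < 1"
    using mult_left_le[OF prob_simplex_le_1[OF u(1), of k] less_imp_le[OF t(1)]] t(2) by linarith
  then have s: "1 < s"
    using t(1) u(2) unfolding s_def by (simp add: field_simps)
  have u_nonneg: "\<forall>i. 0 \<le> u $ i"
    using u(1) prob_simplex_nonneg by blast
  show ?thesis
  proof (cases "j = k")
    case True
    have "V < 1 * ((1 - t) * arm_div m c u a k)"
      using V(3) by simp
    also have "\<dots> \<le> s * ((1 - t) * arm_div m c u a k)"
      using s V by (intro mult_right_mono) auto
    also have "\<dots> = pair_div (s * (1 - t) * (u $ a / c $ a)) (s * (1 - t) * (u $ k / c $ k)) (m $ a) (m $ k)"
      unfolding arm_div_def mult.assoc[of s] pair_div_scale ..
    also have "\<dots> \<le> pair_div (s * (u $ a / c $ a)) (s * (1 - t) * (u $ k / c $ k)) (m $ a) (m $ k)"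
      using s t u_nonneg c_pos m_in
      by (intro pair_div_mono mult_nonneg_nonneg divide_nonneg_pos mult_right_mono) auto
    also have "\<dots> = arm_div m c (shift_weight t k u) a j"
      unfolding arm_div_def shift_weight_def s_def using True k by (simp add: mult.assoc)
    finally show ?thesis .
  next
    case False
    have "1 * arm_div m c u a j < s * arm_div m c u a j"
      using V by (intro mult_strict_right_mono[OF s]) linarith
    then have "V < s * arm_div m c u a j"
      using V(2) by linarith
    also have "s * arm_div m c u a j = arm_div m c (shift_weight t k u) a j"
      unfolding shift_weight_def arm_div_scaleR s_def using False k by (simp add: arm_div_def)
    finally show ?thesis .
  qed
qed

text \<open>At the optimum every challenger is equally costly: if arm k were strictly costlier
  than the minimum, moving a little weight from k to all other arms proportionally would
  raise every term.\<close>
lemma optimal_weights_balanced: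
  assumes opt: "optimal_weights m c u" and k: "k \<noteq> a"
  shows "arm_div m c u a k = objective Th b m c u"
proof (rule antisym)
  define V where "V = objective Th b m c u"
  have u_simplex: "u \<in> prob_simplex"
    and u_max: "\<And>v. v \<in> prob_simplex \<Longrightarrow> objective Th b m c v \<le> V"
    using opt unfolding optimal_weights_def V_def by auto
  have u_nonneg: "\<forall>i. 0 \<le> u $ i"
    using u_simplex prob_simplex_nonneg by blast
  show "objective Th b m c u \<le> arm_div m c u a k"
    by (rule objective_le_arm_div[OF best m_in c_pos u_nonneg k])
  show "arm_div m c u a k \<le> objective Th b m c u"
  proof (rule ccontr)
    define H where "H = arm_div m c u a k"
    assume "\<not> arm_div m c u a k \<le> objective Th b m c u"
    moreover have "0 < V" "0 < u $ k"
      using optimal_weights_pos[OF opt] k unfolding V_def by auto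
    ultimately have "V < H" "0 < V" "0 < u $ k"
      unfolding V_def H_def by auto
    define t where "t = (H - V) / (2 * H)"
    have t: "0 < t" "t < 1" "V < (1 - t) * H"
      using \<open>V < H\<close> \<open>0 < V\<close> unfolding t_def by (auto simp: field_simps)
    have "V < arm_div m c (shift_weight t k u) a j" if "j \<noteq> a" for j
      using less_arm_div_shift_weight[OF u_simplex \<open>0 < u $ k\<close> t(1,2) k that \<open>0 < V\<close>]
        objective_le_arm_div[OF best m_in c_pos u_nonneg that] t(3)
      unfolding V_def H_def by blast
    moreover have "shift_weight t k u \<in> prob_simplex"
      using shift_weight_in_prob_simplex[OF u_simplex] t by simp
    ultimately have "V < objective Th b m c (shift_weight t k u)"
      by (simp add: less_objective_iff[OF best m_in c_pos _ k] prob_simplex_nonneg)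
    then show False
      using u_max[OF \<open>shift_weight t k u \<in> prob_simplex\<close>] by simp
  qed
qed

lemma optimal_weights_midpoint:
  assumes opt: "optimal_weights m c w" and opt': "optimal_weights m c w'" and other: "j0 \<noteq> a"
  shows "optimal_weights m c ((1/2) *\<^sub>R (w + w'))"
proof -
  define u where "u = (1/2) *\<^sub>R (w + w')"
  have simplex: "w \<in> prob_simplex" "w' \<in> prob_simplex"
    using opt opt' unfolding optimal_weights_def by auto
  then have nonneg: "\<forall>i. 0 \<le> w $ i" "\<forall>i. 0 \<le> w' $ i"
    using prob_simplex_nonneg by blast+
  have u_simplex: "u \<in> prob_simplex"
    using simplex unfolding prob_simplex_def u_def by (simp add: sum.distrib flip: sum_divide_distrib)
  have "objective Th b m c w \<le> arm_div m c u a k" if "k \<noteq> a" for k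
  proof -
    have "objective Th b m c w' = objective Th b m c w"
      using opt opt' simplex unfolding optimal_weights_def by (meson antisym)
    then show ?thesis
      using objective_le_arm_div[OF best m_in c_pos nonneg(1) that]
        objective_le_arm_div[OF best m_in c_pos nonneg(2) that]
        arm_div_superadditive[OF nonneg, of k]
      unfolding u_def arm_div_scaleR by simp
  qed
  moreover have "\<forall>i. 0 \<le> u $ i"
    using u_simplex prob_simplex_nonneg by blast
  ultimately have "objective Th b m c w \<le> objective Th b m c u"
    by (simp add: le_objective_iff[OF best m_in c_pos _ other])
  then show ?thesis
    using opt u_simplex unfolding optimal_weights_def u_def by (auto intro: order_trans)
qed

lemma optimal_weights_unique:
  assumes opt: "optimal_weights m c w" and opt': "optimal_weights m c w'"
  shows "w = w'"
proof (cases "\<exists>j. j \<noteq> a")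
  case False
  have "w $ a \<noteq> 0"
  proof
    assume "w $ a = 0"
    then have "w $ j = 0" for j
      using False by auto
    then show False
      using opt unfolding optimal_weights_def prob_simplex_def by simp
  qed
  moreover have "w $ a * w' $ j = w' $ a * w $ j" for j
    using False by (auto simp: mult.commute)
  ultimately show ?thesis
    by (rule prob_simplex_proportional_eq[rotated 2])
      (use opt opt' in \<open>simp_all add: optimal_weights_def\<close>)
next
  case other: True
  then obtain j0 where "j0 \<noteq> a" ..
  define u where "u = (1/2) *\<^sub>R (w + w')"
  have opt_u: "optimal_weights m c u"
    unfolding u_def by (rule optimal_weights_midpoint[OF opt opt' \<open>j0 \<noteq> a\<close>])
  have nonneg: "\<forall>i. 0 \<le> w $ i" "\<forall>i. 0 \<le> w' $ i"
    using opt opt' prob_simplex_nonneg unfolding optimal_weights_def by blast+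
  have pos: "\<forall>i. 0 < w $ i" "\<forall>i. 0 < w' $ i"
    using optimal_weights_pos(2)[OF opt other] optimal_weights_pos(2)[OF opt' other] by auto
  have same_value: "objective Th b m c v = objective Th b m c u" if "optimal_weights m c v" for v
    using that opt_u unfolding optimal_weights_def by (meson antisym)
  have "w $ a \<noteq> 0"
    using pos(1) by (metis less_irrefl)
  moreover have "w $ a * w' $ j = w' $ a * w $ j" for j
  proof (cases "j = a")
    case False
    text \<open>2 V \<le> I_j(w) + I_j(w') \<le> I_j(w + w') = 2 I_j(u) = 2 V, with V the optimal value.\<close>
    have "arm_div m c (w + w') a j = 2 * objective Th b m c u"
      using optimal_weights_balanced[OF opt_u False] unfolding u_def arm_div_scaleR by simp
    then have "arm_div m c (w + w') a j = arm_div m c w a j + arm_div m c w' a j"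
      using objective_le_arm_div[OF best m_in c_pos nonneg(1) False]
        objective_le_arm_div[OF best m_in c_pos nonneg(2) False]
        arm_div_superadditive[OF nonneg, of j] same_value[OF opt] same_value[OF opt'] by linarith
    then show ?thesis
      by (rule arm_div_superadditive_eq_imp_proportional[OF pos False])
  qed (simp add: mult.commute)
  ultimately show ?thesis
    by (rule prob_simplex_proportional_eq[rotated 2])
      (use opt opt' in \<open>simp_all add: optimal_weights_def\<close>)
qed

end

lemma continuous_objective:
  fixes m c :: "real^'k::finite"
  assumes "unique_best m a" "\<forall>i. m $ i \<in> M" "\<forall>i. 0 < c $ i" "w \<in> prob_simplex"
    and P: "P \<subseteq> {(m', c'). (\<forall>i. m' $ i \<in> M) \<and> (\<forall>i. 0 < c' $ i)}"
  shows "continuous (at ((m, c), w) within P \<times> prob_simplex)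
           (\<lambda>(p, v). objective Th b (fst p) (snd p) v)"
proof -
  let ?F = "at ((m, c), w) within P \<times> prob_simplex"
  have "\<forall>\<^sub>F x in ?F. x \<in> P \<times> prob_simplex"
    by (simp add: eventually_at_filter)
  then have ev: "\<forall>\<^sub>F x in ?F.
      (\<forall>i. fst (fst x) $ i \<in> M) \<and> (\<forall>i. 0 < snd (fst x) $ i) \<and> (\<forall>i. 0 \<le> snd x $ i)"
    by eventually_elim (use P prob_simplex_nonneg in auto)
  have lim: "((\<lambda>x. fst (fst x)) \<longlongrightarrow> m) ?F" "((\<lambda>x. snd (fst x)) \<longlongrightarrow> c) ?F"
      "((\<lambda>x. snd x) \<longlongrightarrow> w) ?F"
    by (auto intro!: tendsto_eq_intros tendsto_ident_at)
  show ?thesis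
    unfolding continuous_within case_prod_beta
    using tendsto_objective[OF assms(1-3) _ lim ev] prob_simplex_nonneg[OF assms(4)] by simp
qed

end

theorem lemma3:
  fixes Th :: "real set" and b :: "real \<Rightarrow> real" and ell :: real
    and mu c :: "real^'k::finite"
  assumes "nef Th b"
    and "ell > 0"
    and "\<forall>a. mu $ a \<in> nef_means Th b"
    and "has_unique_best mu"
    and "\<forall>a. ell \<le> c $ a \<and> c $ a \<le> 1"
  shows "continuous (at (mu, c) within
            {(m', c'). (\<forall>a. m' $ a \<in> nef_means Th b) \<and> has_unique_best m' \<and> (\<forall>a. 0 < c' $ a)})
          (\<lambda>(m', c'). wstar Th b m' c')"
proof -
  interpret nef_family Th b
    by unfold_locales (fact assms(1))
  let ?P = "{(m', c'). (\<forall>a. m' $ a \<in> M) \<and> has_unique_best m' \<and> (\<forall>a. 0 < c' $ a)}"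
  obtain a where best: "unique_best mu a"
    using assms(4) unfolding has_unique_best_def ..
  have c_pos: "\<forall>a. 0 < c $ a"
    using assms(2,5) by (meson less_le_trans)
  have optimal: "optimal_weights m' c' (wstar Th b m' c')" if "(m', c') \<in> ?P" for m' c'
    using wstar_optimal that by auto
  have mu_c: "(mu, c) \<in> ?P"
    using assms(3,4) c_pos by simp
  have "continuous (at ((mu, c), w) within ?P \<times> prob_simplex)
      (\<lambda>(p, v). objective Th b (fst p) (snd p) v)" if "w \<in> prob_simplex" for w
    by (rule continuous_objective[OF best assms(3) c_pos that]) auto
  then show ?thesis
    using mu_c optimal optimal_weights_unique[OF best assms(3) c_pos _ optimal[OF mu_c]]
    by (intro continuous_within_argmax[OF compact_prob_simplex,
          where F = "\<lambda>p. objective Th b (fst p) (snd p)"]) (auto simp: optimal_weights_def)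
qed

end
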